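(* There exist finite category presentations $C,D,E$ and finite nongenerative uncurried profunctor presentations $P:C\nrightarrow D$ and $Q:D\nrightarrow E$ such that $[\![P]\!]\odot[\![Q]\!]:[\![C]\!]\nrightarrow[\![E]\!]$ does not admit a finite uncurried profunctor presentation (i.e. is not isomorphic to $[\![R]\!]$ for any finite uncurried presentation $R:C\nrightarrow E$).
   Context: Category presentations $C$: sorts, function symbols $f:c\to c'$, equations $C_E$ between parallel paths (composable lists of function symbols, possibly empty); finite if all these sets are finite. Provable equality $\approx_C$: the smallest equivalence relation on paths containing $C_E$ and closed under concatenation with composable function symbols; $[\![C]\!]$: sorts as objects, $\approx_C$-classes of paths as morphisms. Profunctors $\mathcal P:\mathcal C\nrightarrow\mathcal D$: categories over $\mathbf 2=\{0\to1\}$ with fibres $\mathcal C,\mathcal D$, equivalently functors $\mathcal C^{op}\times\mathcal D\to\mathbf{Set}$. Composite: $(\mathcal P\odot\mathcal Q)(c,e)=\int^{d}\mathcal P(c,d)\times\mathcal Q(d,e)$, the quotient of $\coprod_d\mathcal P(c,d)\times\mathcal Q(d,e)$ by the equivalence relation generated by $(p,\mathcal Q(g,1)q')\sim(\mathcal P(1,g)p,q')$ for $g:d\to d'$. Uncurried presentations $P:C\nrightarrow D$: a set $\mathrm{Fun}(P)$ of symbols $x:c\to d$ ($c$ a $C$-sort, $d$ a $D$-sort) and a set $P_E$ of equations between cross-paths (paths from a $C$-sort to a $D$-sort) of the category presentation $|P|$ with sorts $\mathrm{Sort}(C)+\mathrm{Sort}(D)$, symbols $\mathrm{Fun}(C)+\mathrm{Fun}(P)+\mathrm{Fun}(D)$,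 equations $C_E+P_E+D_E$; $\approx_P$ is provable equality of $|P|$ restricted to cross-paths; finite if $C,D,\mathrm{Fun}(P),P_E$ are finite; $[\![P]\!]=[\![|P|]\!]$ with $C$-sorts over $0$, $D$-sorts over $1$. A short left cross-path is $f.p$ with $f\in\mathrm{Fun}(C)$, $p\in\mathrm{Fun}(P)$; a right cross-path is $p.g$ with $p\in\mathrm{Fun}(P)$ and $g$ a $D$-path. $P$ is nongenerative if every short left cross-path is $\approx_P$-equal to some right cross-path. *)

theory Defs
  imports Main
begin

text \<open>Paths are written in diagrammatic order as lists of symbols, together with
 their source sort (so that empty paths carry a sort). An equation (s,u,v) equates the paths
 u and v starting at sort s.\<close>

record ('s, 'f) catpres =
  sorts :: "'s set"
  funs  :: "'f set"
  fsrc  :: "'f \<Rightarrow> 's"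
  ftgt  :: "'f \<Rightarrow> 's"
  eqns  :: "('s \<times> 'f list \<times> 'f list) set"

fun chain :: "('s, 'f) catpres \<Rightarrow> 's \<Rightarrow> 'f list \<Rightarrow> 's \<Rightarrow> bool" where
  "chain T s [] t \<longleftrightarrow> s \<in> sorts T \<and> t = s"
| "chain T s (f # fs) t \<longleftrightarrow> s \<in> sorts T \<and> f \<in> funs T \<and> fsrc T f = s \<and> chain T (ftgt T f) fs t"

definition wf_catpres :: "('s, 'f) catpres \<Rightarrow> bool" where
  "wf_catpres T \<longleftrightarrow>
     (\<forall>f \<in> funs T. fsrc T f \<in> sorts T \<and> ftgt T f \<in> sorts T) \<and>
     (\<forall>(s, u, v) \<in> eqns T. \<exists>t. chain T s u t \<and> chain T s v t)"

definition finite_catpres :: "('s, 'f) catpres \<Rightarrow> bool" where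
  "finite_catpres T \<longleftrightarrow> finite (sorts T) \<and> finite (funs T) \<and> finite (eqns T)"

inductive peq :: "('s, 'f) catpres \<Rightarrow> 's \<Rightarrow> 'f list \<Rightarrow> 'f list \<Rightarrow> bool" for T where
  ax:   "(s, u, v) \<in> eqns T \<Longrightarrow> peq T s u v"
| rfl:  "chain T s u t \<Longrightarrow> peq T s u u"
| sym:  "peq T s u v \<Longrightarrow> peq T s v u"
| trans: "peq T s u v \<Longrightarrow> peq T s v w \<Longrightarrow> peq T s u w"
| pre:  "peq T s u v \<Longrightarrow> f \<in> funs T \<Longrightarrow> ftgt T f = s \<Longrightarrow> peq T (fsrc T f) (f # u) (f # v)"
| post: "peq T s u v \<Longrightarrow> chain T s u t \<Longrightarrow> f \<in> funs T \<Longrightarrow> fsrc T f = t \<Longrightarrow>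
         peq T s (u @ [f]) (v @ [f])"

text \<open>Morphisms of the presented category [[T]]: provable-equality classes of paths.\<close>
definition cls :: "('s, 'f) catpres \<Rightarrow> 's \<Rightarrow> 'f list \<Rightarrow> 'f list set" where
  "cls T s u = {v. peq T s u v}"

definition homs :: "('s, 'f) catpres \<Rightarrow> 's \<Rightarrow> 's \<Rightarrow> 'f list set set" where
  "homs T s t = {cls T s u | u. chain T s u t}"

text \<open>P : C -/-> D with C-sorts 'a, D-sorts 'b, C-symbols 'f, D-symbols 'g, P-symbols 'p.
 The combined presentation |P| has sorts 'a + 'b and symbols 'f + 'p + 'g.\<close>

record ('a, 'b, 'f, 'g, 'p) upres =
  pfuns :: "'p set"
  psrc  :: "'p \<Rightarrow> 'a"
  ptgt  :: "'p \<Rightarrow> 'b"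
  peqns :: "(('a + 'b) \<times> ('f + 'p + 'g) list \<times> ('f + 'p + 'g) list) set"

definition tot :: "('a, 'f) catpres \<Rightarrow> ('a, 'b, 'f, 'g, 'p) upres \<Rightarrow> ('b, 'g) catpres
                     \<Rightarrow> ('a + 'b, 'f + 'p + 'g) catpres" where
  "tot C P D = \<lparr> sorts = Inl ` sorts C \<union> Inr ` sorts D,
      funs = Inl ` funs C \<union> (Inr \<circ> Inl) ` pfuns P \<union> (Inr \<circ> Inr) ` funs D,
      fsrc = case_sum (Inl \<circ> fsrc C) (case_sum (Inl \<circ> psrc P) (Inr \<circ> fsrc D)),
      ftgt = case_sum (Inl \<circ> ftgt C) (case_sum (Inr \<circ> ptgt P) (Inr \<circ> ftgt D)),
      eqns = (\<lambda>(s, u, v). (Inl s, map Inl u, map Inl v)) ` eqns C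
             \<union> peqns P
             \<union> (\<lambda>(s, u, v). (Inr s, map (Inr \<circ> Inr) u, map (Inr \<circ> Inr) v)) ` eqns D \<rparr>"

definition wf_upres :: "('a, 'f) catpres \<Rightarrow> ('a, 'b, 'f, 'g, 'p) upres \<Rightarrow> ('b, 'g) catpres \<Rightarrow> bool" where
  "wf_upres C P D \<longleftrightarrow> wf_catpres C \<and> wf_catpres D \<and>
     (\<forall>p \<in> pfuns P. psrc P p \<in> sorts C \<and> ptgt P p \<in> sorts D) \<and>
     (\<forall>(s, u, v) \<in> peqns P. \<exists>c d. s = Inl c \<and>
         chain (tot C P D) s u (Inr d) \<and> chain (tot C P D) s v (Inr d))"

definition finite_upres :: "('a, 'f) catpres \<Rightarrow> ('a, 'b, 'f, 'g, 'p) upres \<Rightarrow> ('b, 'g) catpres \<Rightarrow> bool" where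
  "finite_upres C P D \<longleftrightarrow> finite_catpres C \<and> finite_catpres D \<and> finite (pfuns P) \<and> finite (peqns P)"

definition nongenerative :: "('a, 'f) catpres \<Rightarrow> ('a, 'b, 'f, 'g, 'p) upres \<Rightarrow> ('b, 'g) catpres \<Rightarrow> bool" where
  "nongenerative C P D \<longleftrightarrow>
     (\<forall>f \<in> funs C. \<forall>p \<in> pfuns P. ftgt C f = psrc P p \<longrightarrow>
        (\<exists>p' \<in> pfuns P. \<exists>g d. chain D (ptgt P p') g d \<and>
           peq (tot C P D) (Inl (fsrc C f)) [Inl f, Inr (Inl p)] (Inr (Inl p') # map (Inr \<circ> Inr) g)))"

text \<open>The profunctor [[P]] : [[C]] -/-> [[D]]: its elements over (c,d) are classes of cross-paths,
 with left action by C-paths and right action by D-paths.\<close>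
definition pelts :: "('a, 'f) catpres \<Rightarrow> ('a, 'b, 'f, 'g, 'p) upres \<Rightarrow> ('b, 'g) catpres
                      \<Rightarrow> 'a \<Rightarrow> 'b \<Rightarrow> ('f + 'p + 'g) list set set" where
  "pelts C P D c d = homs (tot C P D) (Inl c) (Inr d)"

definition lact :: "('a, 'f) catpres \<Rightarrow> ('a, 'b, 'f, 'g, 'p) upres \<Rightarrow> ('b, 'g) catpres
                      \<Rightarrow> 'a \<Rightarrow> 'f list \<Rightarrow> ('f + 'p + 'g) list set \<Rightarrow> ('f + 'p + 'g) list set" where
  "lact C P D c' f X = (\<Union>u \<in> X. cls (tot C P D) (Inl c') (map Inl f @ u))"

definition ract :: "('a, 'f) catpres \<Rightarrow> ('a, 'b, 'f, 'g, 'p) upres \<Rightarrow> ('b, 'g) catpres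
                      \<Rightarrow> 'a \<Rightarrow> ('f + 'p + 'g) list set \<Rightarrow> 'g list \<Rightarrow> ('f + 'p + 'g) list set" where
  "ract C P D c X g = (\<Union>u \<in> X. cls (tot C P D) (Inl c) (u @ map (Inr \<circ> Inr) g))"

definition comp_triples ::
  "('a, 'f) catpres \<Rightarrow> ('a, 'b, 'f, 'g, 'p) upres \<Rightarrow> ('b, 'g) catpres \<Rightarrow> ('b, 'c, 'g, 'h, 'q) upres
    \<Rightarrow> ('c, 'h) catpres \<Rightarrow> 'a \<Rightarrow> 'c
    \<Rightarrow> ('b \<times> ('f + 'p + 'g) list set \<times> ('g + 'q + 'h) list set) set" where
  "comp_triples C P D Q E c e =
     {(d, X, Y). d \<in> sorts D \<and> X \<in> pelts C P D c d \<and> Y \<in> pelts D Q E d e}"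

inductive comp_eq ::
  "('a, 'f) catpres \<Rightarrow> ('a, 'b, 'f, 'g, 'p) upres \<Rightarrow> ('b, 'g) catpres \<Rightarrow> ('b, 'c, 'g, 'h, 'q) upres
    \<Rightarrow> ('c, 'h) catpres \<Rightarrow> 'a \<Rightarrow> 'c
    \<Rightarrow> ('b \<times> ('f + 'p + 'g) list set \<times> ('g + 'q + 'h) list set)
    \<Rightarrow> ('b \<times> ('f + 'p + 'g) list set \<times> ('g + 'q + 'h) list set) \<Rightarrow> bool"
  for C P D Q E c e where
  rfl: "x \<in> comp_triples C P D Q E c e \<Longrightarrow> comp_eq C P D Q E c e x x"
| gen: "chain D d g d' \<Longrightarrow> X \<in> pelts C P D c d \<Longrightarrow> Y \<in> pelts D Q E d' e \<Longrightarrow>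
        comp_eq C P D Q E c e (d, X, lact D Q E d g Y) (d', ract C P D c X g, Y)"
| sym: "comp_eq C P D Q E c e x y \<Longrightarrow> comp_eq C P D Q E c e y x"
| trans: "comp_eq C P D Q E c e x y \<Longrightarrow> comp_eq C P D Q E c e y z \<Longrightarrow> comp_eq C P D Q E c e x z"

definition comp_elts where
  "comp_elts C P D Q E c e = comp_triples C P D Q E c e // {(x, y). comp_eq C P D Q E c e x y}"

definition cact where
  "cact C P D Q E c' e' f Z h =
     {w. \<exists>(d, X, Y) \<in> Z. comp_eq C P D Q E c' e' (d, lact C P D c' f X, ract D Q E d Y h) w}"

definition iso_to_comp ::
  "('a, 'f) catpres \<Rightarrow> ('a, 'c, 'f, 'h, 'r) upres \<Rightarrow> ('c, 'h) catpres
   \<Rightarrow> ('a, 'b, 'f, 'g, 'p) upres \<Rightarrow> ('b, 'g) catpres \<Rightarrow> ('b, 'c, 'g, 'h, 'q) upres \<Rightarrow> bool" where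
  "iso_to_comp C R E P D Q \<longleftrightarrow>
     (\<exists>\<phi>. (\<forall>c \<in> sorts C. \<forall>e \<in> sorts E.
              bij_betw (\<phi> c e) (pelts C R E c e) (comp_elts C P D Q E c e)) \<and>
          (\<forall>c c' e e' f h X. chain C c' f c \<longrightarrow> chain E e h e' \<longrightarrow> X \<in> pelts C R E c e \<longrightarrow>
              \<phi> c' e' (ract C R E c' (lact C R E c' f X) h) = cact C P D Q E c' e' f (\<phi> c e X) h))"

end

theory Submission
  imports Defs
begin

text \<open>Here \<open>[[P]]\<close> is the free right \<open>\<nat>\<close>-set on one generator and \<open>[[P]] \<odot> [[Q]]\<close> is
  \<open>[[Q]]\<close> with the action of \<open>x\<close> forgotten: its elements are the words in \<open>e\<^sub>0, e\<^sub>1\<close> modulo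
  \<open>e\<^sub>0\<^sup>n e\<^sub>1 e\<^sub>1 = e\<^sub>0\<^sup>n e\<^sub>1\<close> for every \<open>n\<close>. As \<open>C\<close> has no morphisms, a presentation \<open>R\<close> of
  the composite reads every generator \<open>r\<close> as a word \<open>a r\<close>, hence every cross-path of \<open>|R|\<close> as a
  word, and a finite \<open>R\<close> only has equations between words shorter than some \<open>n\<close>. Derivations
  from such equations never identify two distinct words beginning with \<open>n\<close> zeros. But by
  surjectivity and naturality some cross-path \<open>l\<close> reads as \<open>e\<^sub>0\<^sup>n\<close>, and the composite identifies
  \<open>l.e\<^sub>1\<close> with \<open>l.e\<^sub>1.e\<^sub>1\<close>; by injectivity \<open>R\<close> would have to do so as well.\<close>

lemma chain_sort: "chain T s u t \<Longrightarrow> s \<in> sorts T"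
  by (cases u) auto

lemma chain_append: "chain T s (u @ v) t \<longleftrightarrow> (\<exists>m. chain T s u m \<and> chain T m v t)"
  by (induction u arbitrary: s) (auto dest: chain_sort)

lemma chain_target_unique: "chain T s u t \<Longrightarrow> chain T s u t' \<Longrightarrow> t = t'"
  by (induction u arbitrary: s) auto

lemma chain_target_sort: "wf_catpres T \<Longrightarrow> chain T s u t \<Longrightarrow> t \<in> sorts T"
  by (induction u arbitrary: s) (auto simp: wf_catpres_def)

lemma peq_imp_chains: "peq T s u v \<Longrightarrow> wf_catpres T \<Longrightarrow> \<exists>t. chain T s u t \<and> chain T s v t"
proof (induction rule: peq.induct)
  case (trans s u v w)
  then obtain t1 t2 where "chain T s u t1" "chain T s v t1" "chain T s v t2" "chain T s w t2"
    by blast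
  then show ?case using chain_target_unique[of T s v t1 t2] by blast
next
  case (post s u v t f)
  then obtain t' where "chain T s u t'" "chain T s v t'" by blast
  then show ?case
    using post chain_target_unique[of T s u t' t] by (auto simp: chain_append wf_catpres_def)
qed (auto simp: wf_catpres_def)

lemma peq_append_right:
  "peq T s u v \<Longrightarrow> chain T s u m \<Longrightarrow> chain T m w t \<Longrightarrow> peq T s (u @ w) (v @ w)"
proof (induction w arbitrary: u v m)
  case (Cons f w)
  have "peq T s (u @ [f]) (v @ [f])" using Cons by (intro peq.post) auto
  moreover have "chain T s (u @ [f]) (ftgt T f)"
    using Cons by (auto simp: chain_append dest: chain_sort)
  ultimately show ?case using Cons.IH[of "u @ [f]" "v @ [f]"] Cons.prems by auto
qed simp

lemma peq_append_left: "peq T s u v \<Longrightarrow> chain T s' g s \<Longrightarrow> peq T s' (g @ u) (g @ v)"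
  by (induction g arbitrary: s') (auto intro: peq.pre)

lemma cls_eqI: "peq T s u v \<Longrightarrow> cls T s u = cls T s v"
  unfolding cls_def by (auto intro: peq.sym peq.trans)

lemma self_in_cls: "chain T s u t \<Longrightarrow> u \<in> cls T s u"
  unfolding cls_def by (auto intro: peq.rfl)

lemma UN_cls_append_right:
  assumes "chain T s u m" "chain T m w t"
  shows "(\<Union>v\<in>cls T s u. cls T s (v @ w)) = cls T s (u @ w)"
proof
  show "(\<Union>v\<in>cls T s u. cls T s (v @ w)) \<subseteq> cls T s (u @ w)"
    using cls_eqI[OF peq_append_right[OF _ assms]] by (auto simp: cls_def)
  show "cls T s (u @ w) \<subseteq> (\<Union>v\<in>cls T s u. cls T s (v @ w))"
    using self_in_cls[OF assms(1)] by blast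
qed

lemma UN_cls_append_left:
  assumes "chain T s u m" "chain T s' g s"
  shows "(\<Union>v\<in>cls T s u. cls T s' (g @ v)) = cls T s' (g @ u)"
proof
  show "(\<Union>v\<in>cls T s u. cls T s' (g @ v)) \<subseteq> cls T s' (g @ u)"
    using cls_eqI[OF peq_append_left[OF _ assms(2)]] by (auto simp: cls_def)
  show "cls T s' (g @ u) \<subseteq> (\<Union>v\<in>cls T s u. cls T s' (g @ v))"
    using self_in_cls[OF assms(1)] by blast
qed

lemma chain_tot_Inl: "chain C s g t \<Longrightarrow> chain (tot C P D) (Inl s) (map Inl g) (Inl t)"
  by (induction g arbitrary: s) (auto simp: tot_def)

lemma chain_tot_Inr: "chain D s w t \<Longrightarrow> chain (tot C P D) (Inr s) (map (Inr \<circ> Inr) w) (Inr t)"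
  by (induction w arbitrary: s) (auto simp: tot_def)

lemma chain_tot_InrE:
  assumes "chain (tot C P D) (Inr s) v t"
  obtains w t' where "v = map (Inr \<circ> Inr) w" "chain D s w t'" "t = Inr t'"
proof -
  have "\<exists>w t'. v = map (Inr \<circ> Inr) w \<and> chain D s w t' \<and> t = Inr t'"
    using assms
  proof (induction v arbitrary: s)
    case (Cons f v)
    then obtain g where g: "f = Inr (Inr g)" "g \<in> funs D" "fsrc D g = s"
      by (auto simp: tot_def)
    then have "chain (tot C P D) (Inr (ftgt D g)) v t" using Cons.prems by (simp add: tot_def)
    then obtain w t' where "v = map (Inr \<circ> Inr) w" "chain D (ftgt D g) w t'" "t = Inr t'"
      using Cons.IH by blast
    then show ?case
      using g Cons.prems by (intro exI[of _ "g # w"] exI[of _ t']) (auto simp: tot_def)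
  qed (auto simp: tot_def)
  then show ?thesis using that by blast
qed

lemma chain_tot_cross_funs_empty:
  assumes "funs C = {}" "chain (tot C P D) (Inl c) l (Inr d)"
  obtains r w where "l = Inr (Inl r) # map (Inr \<circ> Inr) w" "r \<in> pfuns P" "psrc P r = c"
    "chain D (ptgt P r) w d"
proof (cases l)
  case (Cons f v)
  then obtain r where r: "f = Inr (Inl r)" "r \<in> pfuns P" "psrc P r = c"
    using assms by (auto simp: tot_def)
  then have "chain (tot C P D) (Inr (ptgt P r)) v (Inr d)"
    using assms Cons by (simp add: tot_def)
  then show ?thesis by (rule chain_tot_InrE) (use that Cons r in auto)
qed (use assms in auto)

lemma wf_catpres_tot:
  assumes "wf_upres C P D"
  shows "wf_catpres (tot C P D)"
proof -
  have C: "wf_catpres C" and D: "wf_catpres D"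
    and P: "\<forall>p \<in> pfuns P. psrc P p \<in> sorts C \<and> ptgt P p \<in> sorts D"
    and PE: "\<forall>(s, u, v) \<in> peqns P. \<exists>c d. s = Inl c \<and>
               chain (tot C P D) s u (Inr d) \<and> chain (tot C P D) s v (Inr d)"
    using assms unfolding wf_upres_def by auto
  have "\<exists>t. chain (tot C P D) s u t \<and> chain (tot C P D) s v t"
    if eq: "(s, u, v) \<in> eqns (tot C P D)" for s u v
  proof -
    consider (eqC) s0 u0 v0 where "(s0, u0, v0) \<in> eqns C"
          "s = Inl s0" "u = map Inl u0" "v = map Inl v0"
      | (eqP) "(s, u, v) \<in> peqns P"
      | (eqD) s0 u0 v0 where "(s0, u0, v0) \<in> eqns D"
          "s = Inr s0" "u = map (Inr \<circ> Inr) u0" "v = map (Inr \<circ> Inr) v0"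
      using eq unfolding tot_def by (auto split: prod.splits)
    then show ?thesis
    proof cases
      case eqC
      then obtain t where "chain C s0 u0 t" "chain C s0 v0 t"
        using C unfolding wf_catpres_def by blast
      then show ?thesis using eqC chain_tot_Inl[of C s0 _ t P D] by auto
    next
      case eqP
      then show ?thesis using PE by blast
    next
      case eqD
      then obtain t where "chain D s0 u0 t" "chain D s0 v0 t"
        using D unfolding wf_catpres_def by blast
      then show ?thesis using eqD chain_tot_Inr[of D s0 _ t C P] by auto
    qed
  qed
  moreover have "\<forall>f \<in> funs (tot C P D).
      fsrc (tot C P D) f \<in> sorts (tot C P D) \<and> ftgt (tot C P D) f \<in> sorts (tot C P D)"
    using C D P unfolding wf_catpres_def tot_def by auto
  ultimately show ?thesis unfolding wf_catpres_def by blast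
qed

text \<open>Equations of a profunctor presentation start at a C-sort, so over a free D nothing
  identifies two distinct paths between D-sorts.\<close>
lemma peq_tot_Inr_eq:
  assumes "wf_upres C P D" "eqns D = {}" "peq (tot C P D) (Inr d) u v"
  shows "u = v"
proof -
  have "\<forall>d. s = Inr d \<longrightarrow> u = v" if "peq (tot C P D) s u v" for s u v
    using that
  proof (induction rule: peq.induct)
    case (ax s u v)
    then show ?case using assms(1,2) by (auto simp: tot_def wf_upres_def)
  next
    case (pre s u v f)
    then show ?case by (auto simp: tot_def)
  qed auto
  then show ?thesis using assms(3) by blast
qed

lemma pelts_clsE:
  assumes "X \<in> pelts C P D c d"
  obtains u where "chain (tot C P D) (Inl c) u (Inr d)" "X = cls (tot C P D) (Inl c) u"
  using assms unfolding pelts_def homs_def by blast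

lemma cls_in_pelts:
  "chain (tot C P D) (Inl c) u (Inr d) \<Longrightarrow> cls (tot C P D) (Inl c) u \<in> pelts C P D c d"
  unfolding pelts_def homs_def by blast

lemma lact_Nil_cls:
  assumes "chain (tot C P D) (Inl c) u t"
  shows "lact C P D c [] (cls (tot C P D) (Inl c) u) = cls (tot C P D) (Inl c) u"
  using UN_cls_append_left[OF assms, of "Inl c" "[]"] chain_sort[OF assms]
  by (simp add: lact_def)

lemma lact_cls:
  assumes "chain (tot C P D) (Inl c) u t" "chain C c' g c"
  shows "lact C P D c' g (cls (tot C P D) (Inl c) u) = cls (tot C P D) (Inl c') (map Inl g @ u)"
  unfolding lact_def using UN_cls_append_left[OF assms(1) chain_tot_Inl[OF assms(2)]] by simp

lemma ract_cls:
  assumes "chain (tot C P D) (Inl c) u (Inr d)" "chain D d g d'"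
  shows "ract C P D c (cls (tot C P D) (Inl c) u) g
           = cls (tot C P D) (Inl c) (u @ map (Inr \<circ> Inr) g)"
  unfolding ract_def using UN_cls_append_right[OF assms(1) chain_tot_Inr[OF assms(2)]] by simp

lemma comp_eq_in_triples:
  assumes "wf_catpres D" "comp_eq C P D Q E c e x y"
  shows "x \<in> comp_triples C P D Q E c e \<and> y \<in> comp_triples C P D Q E c e"
  using assms(2)
proof (induction rule: comp_eq.induct)
  case (gen d g d' X Y)
  obtain u where u: "chain (tot C P D) (Inl c) u (Inr d)" "X = cls (tot C P D) (Inl c) u"
    using gen(2) by (rule pelts_clsE)
  obtain v where v: "chain (tot D Q E) (Inl d') v (Inr e)" "Y = cls (tot D Q E) (Inl d') v"
    using gen(3) by (rule pelts_clsE)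
  have "chain (tot D Q E) (Inl d) (map Inl g @ v) (Inr e)"
    using chain_tot_Inl[OF gen(1), of Q E] v(1) by (auto simp: chain_append)
  then have "lact D Q E d g Y \<in> pelts D Q E d e"
    using lact_cls[OF v(1) gen(1)] v(2) by (simp add: cls_in_pelts)
  moreover have "chain (tot C P D) (Inl c) (u @ map (Inr \<circ> Inr) g) (Inr d')"
    using chain_tot_Inr[OF gen(1), of C P] u(1) by (auto simp: chain_append)
  then have "ract C P D c X g \<in> pelts C P D c d'"
    using ract_cls[OF u(1) gen(1)] u(2) by (simp add: cls_in_pelts)
  ultimately show ?case
    using gen chain_sort[OF gen(1)] chain_target_sort[OF assms(1) gen(1)]
    by (simp add: comp_triples_def)
qed auto

lemma comp_eltsE:
  assumes "Z \<in> comp_elts C P D Q E c e"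
  obtains t where "t \<in> comp_triples C P D Q E c e" "Z = {y. comp_eq C P D Q E c e t y}"
  using assms unfolding comp_elts_def by (auto elim!: quotientE)

lemma comp_elts_subset:
  assumes "wf_catpres D" "Z \<in> comp_elts C P D Q E c e"
  shows "Z \<subseteq> comp_triples C P D Q E c e"
proof -
  obtain t where "Z = {y. comp_eq C P D Q E c e t y}"
    using assms(2) by (rule comp_eltsE)
  then show ?thesis using comp_eq_in_triples[OF assms(1), of C P Q E c e t] by auto
qed

lemma comp_elts_nonempty: "Z \<in> comp_elts C P D Q E c e \<Longrightarrow> Z \<noteq> {}"
  by (erule comp_eltsE) (auto intro: comp_eq.rfl)

section \<open>Words over \<open>{0, 1}\<close>\<close>

text \<open>Normal form for the right congruence generated by \<open>0\<^sup>n 1 1 = 0\<^sup>n 1\<close>: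
  the run of ones following the first \<open>1\<close> collapses.\<close>
fun nf :: "nat list \<Rightarrow> nat list" where
  "nf [] = []"
| "nf (x # w) = (if x = 1 then 1 # dropWhile (\<lambda>y. y = 1) w else x # nf w)"

lemma dropWhile_dropWhile_append: "dropWhile P (dropWhile P x @ z) = dropWhile P (x @ z)"
  by (induction x) auto

lemma nf_append: "nf (x @ z) = nf (nf x @ z)"
  by (induction x) (auto simp: dropWhile_dropWhile_append)

lemma nf_append_zeros: "set a \<subseteq> {0} \<Longrightarrow> nf (a @ z) = a @ nf z"
  by (induction a) auto

lemma nf_zeros: "set x \<subseteq> {0} \<Longrightarrow> nf x = x"
  using nf_append_zeros[of x "[]"] by simp

lemma nf_eq_replicate_zero: "nf y = replicate n 0 \<Longrightarrow> y = replicate n 0"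
proof (induction y arbitrary: n)
  case (Cons x y)
  then show ?case by (cases n) (auto split: if_splits)
qed simp

lemma nf_eq_zeros:
  assumes "set x \<subseteq> {0}" "nf x = nf y"
  shows "x = y"
proof -
  define m where "m = length x"
  have x: "x = replicate m 0" unfolding m_def using assms(1) by (auto intro: replicate_eqI)
  then have "nf y = replicate m 0" using assms nf_zeros by simp
  then have "y = replicate m 0" by (rule nf_eq_replicate_zero)
  with x show ?thesis by simp
qed

definition zero_prefix :: "nat \<Rightarrow> nat list \<Rightarrow> bool" where
  "zero_prefix n x \<longleftrightarrow> take n x = replicate n 0"

lemma zero_prefix_length: "zero_prefix n x \<Longrightarrow> n \<le> length x"
proof -
  assume "zero_prefix n x"
  then have "length (take n x) = n" by (simp add: zero_prefix_def)
  then show ?thesis by simp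
qed

lemma zero_prefix_append:
  assumes "\<not> zero_prefix n x" "zero_prefix n (x @ z)"
  shows "set x \<subseteq> {0}"
proof -
  have "length x < n"
  proof (rule ccontr)
    assume "\<not> length x < n"
    then have "take n (x @ z) = take n x" by simp
    with assms show False unfolding zero_prefix_def by simp
  qed
  then have "x @ take (n - length x) z = replicate n 0"
    using assms(2) by (simp add: zero_prefix_def)
  then have "set (x @ take (n - length x) z) \<subseteq> {0}" by (simp add: set_replicate_conv_if)
  then show ?thesis by simp
qed

text \<open>A congruence generated by pairs of words shorter than \<open>n\<close> never identifies two distinct
  words beginning with \<open>n\<close> zeros; \<open>bounded_equiv n\<close> is the invariant recording this.\<close>
definition bounded_equiv :: "nat \<Rightarrow> nat list \<Rightarrow> nat list \<Rightarrow> bool" where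
  "bounded_equiv n x y \<longleftrightarrow> nf x = nf y \<and> (zero_prefix n x \<or> zero_prefix n y \<longrightarrow> x = y)"

lemma bounded_equiv_refl: "bounded_equiv n x x"
  by (simp add: bounded_equiv_def)

lemma bounded_equiv_sym: "bounded_equiv n x y \<Longrightarrow> bounded_equiv n y x"
  unfolding bounded_equiv_def by metis

lemma bounded_equiv_trans: "bounded_equiv n x y \<Longrightarrow> bounded_equiv n y z \<Longrightarrow> bounded_equiv n x z"
  unfolding bounded_equiv_def by metis

lemma bounded_equiv_append:
  assumes "bounded_equiv n x y"
  shows "bounded_equiv n (x @ z) (y @ z)"
proof -
  have nf: "nf x = nf y" and eq: "zero_prefix n x \<or> zero_prefix n y \<Longrightarrow> x = y"
    using assms by (auto simp: bounded_equiv_def)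
  have "x = y" if "zero_prefix n (x @ z) \<or> zero_prefix n (y @ z)"
  proof (rule ccontr)
    assume "x \<noteq> y"
    then have "\<not> zero_prefix n x" "\<not> zero_prefix n y" using eq by blast+
    then have "set x \<subseteq> {0} \<or> set y \<subseteq> {0}" using that zero_prefix_append by blast
    then show False using nf_eq_zeros nf \<open>x \<noteq> y\<close> by metis
  qed
  then show ?thesis using nf nf_append[of x z] nf_append[of y z] by (auto simp: bounded_equiv_def)
qed

section \<open>The counterexample\<close>

text \<open>\<open>C\<close> is the point, \<open>D\<close> the free monoid on \<open>x\<close> (symbol 0) and \<open>E\<close> the free monoid on
  \<open>e\<^sub>0, e\<^sub>1\<close> (symbols 0, 1). \<open>P\<close> has one generator \<open>p\<close> and no equations; \<open>Q\<close> has one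
  generator \<open>q\<close> subject to \<open>x.q = q.e\<^sub>0\<close> and \<open>q.e\<^sub>1 = q.e\<^sub>1.e\<^sub>1\<close>.\<close>

definition C0 :: "(nat, nat) catpres" where
  "C0 = \<lparr>sorts = {0}, funs = {}, fsrc = \<lambda>_. 0, ftgt = \<lambda>_. 0, eqns = {}\<rparr>"

definition D0 :: "(nat, nat) catpres" where
  "D0 = \<lparr>sorts = {0}, funs = {0}, fsrc = \<lambda>_. 0, ftgt = \<lambda>_. 0, eqns = {}\<rparr>"

definition E0 :: "(nat, nat) catpres" where
  "E0 = \<lparr>sorts = {0}, funs = {0, 1}, fsrc = \<lambda>_. 0, ftgt = \<lambda>_. 0, eqns = {}\<rparr>"

definition P0 :: "(nat, nat, nat, nat, nat) upres" where
  "P0 = \<lparr>pfuns = {0}, psrc = \<lambda>_. 0, ptgt = \<lambda>_. 0, peqns = {}\<rparr>"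

definition Q0 :: "(nat, nat, nat, nat, nat) upres" where
  "Q0 = \<lparr>pfuns = {0}, psrc = \<lambda>_. 0, ptgt = \<lambda>_. 0,
     peqns = {(Inl 0, [Inl 0, Inr (Inl 0)], [Inr (Inl 0), Inr (Inr 0)]),
              (Inl 0, [Inr (Inl 0), Inr (Inr 1)], [Inr (Inl 0), Inr (Inr 1), Inr (Inr 1)])}\<rparr>"

lemmas example_defs = C0_def D0_def E0_def P0_def Q0_def

abbreviation "TP \<equiv> tot C0 P0 D0"
abbreviation "TQ \<equiv> tot D0 Q0 E0"

lemma wf_P0: "wf_upres C0 P0 D0"
  by (simp add: wf_upres_def wf_catpres_def example_defs)

lemma finite_P0: "finite_upres C0 P0 D0"
  by (simp add: finite_upres_def finite_catpres_def example_defs)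

lemma nongenerative_P0: "nongenerative C0 P0 D0"
  by (simp add: nongenerative_def example_defs)

lemma wf_Q0: "wf_upres D0 Q0 E0"
  by (simp add: wf_upres_def wf_catpres_def example_defs tot_def)

lemma finite_Q0: "finite_upres D0 Q0 E0"
  by (simp add: finite_upres_def finite_catpres_def example_defs)

lemma nongenerative_Q0: "nongenerative D0 Q0 E0"
proof -
  have "peq TQ (Inl 0) [Inl 0, Inr (Inl 0)] (Inr (Inl 0) # map (Inr \<circ> Inr) [0])"
    by (rule peq.ax) (simp add: tot_def example_defs)
  moreover have "chain E0 0 [0] 0" by (simp add: example_defs)
  moreover have "funs D0 = {0}" "pfuns Q0 = {0}" "fsrc D0 0 = 0" "ptgt Q0 0 = 0"
    by (simp_all add: example_defs)
  ultimately show ?thesis unfolding nongenerative_def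
    by (intro ballI impI bexI[of _ 0] exI[of _ "[0]"] exI[of _ 0]) auto
qed

lemma wf_D0: "wf_catpres D0"
  by (simp add: wf_catpres_def D0_def)

lemma chain_E0_iff: "chain E0 0 w e \<longleftrightarrow> set w \<subseteq> {0, 1} \<and> e = 0"
  by (induction w) (auto simp: E0_def)

lemma sorts_TQ: "sorts TQ = {Inl 0, Inr 0}"
  by (auto simp: tot_def example_defs)

text \<open>Paths of \<open>|P|\<close>, \<open>|Q|\<close> and of a presentation \<open>R : C \<nrightarrow> E\<close> read as words in
  \<open>e\<^sub>0, e\<^sub>1\<close>: \<open>x\<close> is read as \<open>e\<^sub>0\<close>, and a generator \<open>r\<close> of \<open>R\<close> as a chosen word \<open>a r\<close>.\<close>

fun p_word :: "(nat + nat + nat) list \<Rightarrow> nat list" where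
  "p_word [] = []"
| "p_word (Inl _ # l) = p_word l"
| "p_word (Inr (Inl _) # l) = p_word l"
| "p_word (Inr (Inr _) # l) = 0 # p_word l"

fun q_word :: "(nat + nat + nat) list \<Rightarrow> nat list" where
  "q_word [] = []"
| "q_word (Inl _ # l) = 0 # q_word l"
| "q_word (Inr (Inl _) # l) = q_word l"
| "q_word (Inr (Inr e) # l) = e # q_word l"

fun r_word :: "(nat \<Rightarrow> nat list) \<Rightarrow> (nat + nat + nat) list \<Rightarrow> nat list" where
  "r_word a [] = []"
| "r_word a (Inl _ # l) = r_word a l"
| "r_word a (Inr (Inl r) # l) = a r @ r_word a l"
| "r_word a (Inr (Inr e) # l) = e # r_word a l"

lemma p_word_append [simp]: "p_word (u @ v) = p_word u @ p_word v"
  by (induction u rule: p_word.induct) auto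

lemma q_word_append [simp]: "q_word (u @ v) = q_word u @ q_word v"
  by (induction u rule: q_word.induct) auto

lemma r_word_append [simp]: "r_word a (u @ v) = r_word a u @ r_word a v"
  by (induction a u rule: r_word.induct) auto

lemma p_word_zeros: "set (p_word l) \<subseteq> {0}"
  by (induction l rule: p_word.induct) auto

lemma p_word_map_Inr [simp]: "p_word (map (Inr \<circ> Inr) w) = replicate (length w) 0"
  by (induction w) auto

lemma q_word_map_Inr [simp]: "q_word (map (Inr \<circ> Inr) w) = w"
  by (induction w) auto

lemma q_word_map_Inl [simp]: "q_word (map Inl g) = replicate (length g) 0"
  by (induction g) auto

lemma r_word_map_Inr [simp]: "r_word a (map (Inr \<circ> Inr) w) = w"
  by (induction w) auto

lemma peq_P_word: "peq TP s u v \<Longrightarrow> p_word u = p_word v"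
proof (induction rule: peq.induct)
  case (ax s u v)
  then show ?case by (simp add: tot_def example_defs)
next
  case (pre s u v f)
  have "p_word (f # w) = p_word [f] @ p_word w" for w by (metis append_Cons append_Nil p_word_append)
  then show ?case using pre.IH by metis
qed auto

lemma peq_Q_word: "peq TQ s u v \<Longrightarrow> nf (q_word u) = nf (q_word v)"
proof (induction rule: peq.induct)
  case (ax s u v)
  then show ?case by (auto simp: tot_def example_defs)
next
  case (pre s u v f)
  show ?case
  proof (cases f)
    case Inl
    then show ?thesis using pre.IH by simp
  next
    case (Inr y)
    then obtain d where "s = Inr d" using pre.hyps(3) by (cases y) (auto simp: tot_def)
    then have "u = v" using peq_tot_Inr_eq[OF wf_Q0] pre.hyps(1) by (simp add: E0_def)
    then show ?thesis by simp
  qed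
next
  case (post s u v t f)
  then show ?case using nf_append by (metis q_word_append)
qed auto

lemma peq_R_word:
  assumes wf: "wf_upres C0 R E0"
    and eqns: "\<forall>(s, u, v) \<in> peqns R. bounded_equiv n (r_word a u) (r_word a v)"
    and "peq (tot C0 R E0) s u v"
  shows "bounded_equiv n (r_word a u) (r_word a v)"
  using assms(3)
proof (induction rule: peq.induct)
  case (ax s u v)
  then show ?case using eqns by (auto simp: tot_def example_defs)
next
  case (pre s u v f)
  then obtain d where "s = Inr d" by (auto simp: tot_def example_defs)
  then have "u = v" using peq_tot_Inr_eq[OF wf] pre.hyps(1) by (simp add: E0_def)
  then show ?case by (simp add: bounded_equiv_refl)
next
  case (post s u v t f)
  then show ?case using bounded_equiv_append by (metis r_word_append)
qed (auto intro: bounded_equiv_refl bounded_equiv_sym bounded_equiv_trans)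

text \<open>A triple \<open>(p.x\<^sup>n, q.w)\<close> of \<open>[[P]] \<odot> [[Q]]\<close> corresponds to \<open>q.e\<^sub>0\<^sup>n.w\<close> in \<open>[[Q]]\<close>, whose
  \<open>\<approx>\<^sub>Q\<close>-class is determined by the normal form of the word \<open>0\<^sup>n w\<close>.\<close>

definition comp_word ::
  "nat \<times> (nat + nat + nat) list set \<times> (nat + nat + nat) list set \<Rightarrow> nat list" where
  "comp_word = (\<lambda>(d, X, Y). nf (p_word (SOME u. u \<in> X) @ q_word (SOME v. v \<in> Y)))"

definition class_word ::
  "(nat \<times> (nat + nat + nat) list set \<times> (nat + nat + nat) list set) set \<Rightarrow> nat list" where
  "class_word Z = comp_word (SOME z. z \<in> Z)"

lemma comp_word_cls:
  assumes "chain TP (Inl c) u m" "chain TQ (Inl d') v m'"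
  shows "comp_word (d, cls TP (Inl c) u, cls TQ (Inl d') v) = p_word u @ nf (q_word v)"
proof -
  define x where "x = (SOME x. x \<in> cls TP (Inl c) u)"
  define y where "y = (SOME y. y \<in> cls TQ (Inl d') v)"
  have "x \<in> cls TP (Inl c) u" unfolding x_def using self_in_cls[OF assms(1)] by (rule someI)
  then have x: "p_word x = p_word u" by (simp add: cls_def peq_P_word)
  have "y \<in> cls TQ (Inl d') v" unfolding y_def using self_in_cls[OF assms(2)] by (rule someI)
  then have y: "nf (q_word y) = nf (q_word v)" by (simp add: cls_def peq_Q_word)
  have "comp_word (d, cls TP (Inl c) u, cls TQ (Inl d') v) = nf (p_word x @ q_word y)"
    unfolding comp_word_def x_def y_def by simp
  also have "\<dots> = p_word x @ nf (q_word y)" by (rule nf_append_zeros[OF p_word_zeros])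
  finally show ?thesis using x y by simp
qed

lemma comp_word_comp_eq: "comp_eq C0 P0 D0 Q0 E0 c e x y \<Longrightarrow> comp_word x = comp_word y"
proof (induction rule: comp_eq.induct)
  case (gen d g d' X Y)
  obtain u where u: "chain TP (Inl c) u (Inr d)" "X = cls TP (Inl c) u"
    using gen(2) by (rule pelts_clsE)
  obtain v where v: "chain TQ (Inl d') v (Inr e)" "Y = cls TQ (Inl d') v"
    using gen(3) by (rule pelts_clsE)
  have "chain TQ (Inl d) (map Inl g @ v) (Inr e)"
    using chain_tot_Inl[OF gen(1)] v(1) by (auto simp: chain_append)
  then have "comp_word (d, X, lact D0 Q0 E0 d g Y)
      = p_word u @ nf (replicate (length g) 0 @ q_word v)"
    using comp_word_cls[OF u(1)] lact_cls[OF v(1) gen(1)] u(2) v(2) by simp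
  also have "\<dots> = p_word u @ replicate (length g) 0 @ nf (q_word v)"
    by (subst nf_append_zeros) (auto simp: set_replicate_conv_if)
  also have "\<dots> = comp_word (d', ract C0 P0 D0 c X g, Y)"
  proof -
    have "chain TP (Inl c) (u @ map (Inr \<circ> Inr) g) (Inr d')"
      using chain_tot_Inr[OF gen(1), of C0 P0] u(1) by (auto simp: chain_append)
    then show ?thesis
      using comp_word_cls[OF _ v(1)] ract_cls[OF u(1) gen(1)] u(2) v(2) by simp
  qed
  finally show ?case .
qed auto

lemma class_word_eq:
  assumes "Z \<in> comp_elts C0 P0 D0 Q0 E0 c e" "z \<in> Z"
  shows "class_word Z = comp_word z"
proof -
  obtain t where Z: "Z = {y. comp_eq C0 P0 D0 Q0 E0 c e t y}"
    using assms(1) by (rule comp_eltsE)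
  have "comp_word z' = comp_word t" if "z' \<in> Z" for z'
    using that unfolding Z by (auto dest: comp_word_comp_eq)
  moreover have "(SOME z. z \<in> Z) \<in> Z" using assms(2) by (rule someI)
  ultimately show ?thesis using assms(2) by (simp add: class_word_def)
qed

lemma comp_word_act:
  assumes "(d, X, Y) \<in> comp_triples C0 P0 D0 Q0 E0 c e" "chain E0 e w e'"
  shows "comp_word (d, lact C0 P0 D0 c [] X, ract D0 Q0 E0 d Y w) = nf (comp_word (d, X, Y) @ w)"
proof -
  obtain u where u: "chain TP (Inl c) u (Inr d)" "X = cls TP (Inl c) u"
    using assms(1) by (auto simp: comp_triples_def elim: pelts_clsE)
  obtain v where v: "chain TQ (Inl d) v (Inr e)" "Y = cls TQ (Inl d) v"
    using assms(1) by (auto simp: comp_triples_def elim: pelts_clsE)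
  have "chain TQ (Inl d) (v @ map (Inr \<circ> Inr) w) (Inr e')"
    using chain_tot_Inr[OF assms(2)] v(1) by (auto simp: chain_append)
  then have "comp_word (d, lact C0 P0 D0 c [] X, ract D0 Q0 E0 d Y w) = p_word u @ nf (q_word v @ w)"
    using comp_word_cls[OF u(1)] lact_Nil_cls[OF u(1)] ract_cls[OF v(1) assms(2)] u(2) v(2)
    by simp
  also have "\<dots> = nf (p_word u @ nf (q_word v) @ w)"
    by (metis nf_append nf_append_zeros p_word_zeros)
  also have "\<dots> = nf (comp_word (d, X, Y) @ w)"
    using comp_word_cls[OF u(1) v(1)] u(2) v(2) by simp
  finally show ?thesis .
qed

lemma comp_word_cact:
  assumes "Z \<in> comp_elts C0 P0 D0 Q0 E0 c e" "chain E0 e w e'"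
    and "z \<in> cact C0 P0 D0 Q0 E0 c e' [] Z w"
  shows "comp_word z = nf (class_word Z @ w)"
proof -
  obtain d X Y where t: "(d, X, Y) \<in> Z"
    and z: "comp_eq C0 P0 D0 Q0 E0 c e' (d, lact C0 P0 D0 c [] X, ract D0 Q0 E0 d Y w) z"
    using assms(3) unfolding cact_def by auto
  have "(d, X, Y) \<in> comp_triples C0 P0 D0 Q0 E0 c e"
    using comp_elts_subset[OF wf_D0 assms(1)] t by blast
  then show ?thesis
    using comp_word_comp_eq[OF z] comp_word_act[OF _ assms(2)] class_word_eq[OF assms(1) t]
    by simp
qed

lemma q_normal_form:
  "chain TQ (Inl 0) v (Inr 0) \<Longrightarrow> peq TQ (Inl 0) v (Inr (Inl 0) # map (Inr \<circ> Inr) (q_word v))"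
proof (induction v)
  case (Cons f v)
  have f: "f = Inl 0 \<or> f = Inr (Inl 0)" and v: "chain TQ (ftgt TQ f) v (Inr 0)"
    using Cons.prems by (auto simp: tot_def example_defs)
  from f show ?case
  proof
    assume q: "f = Inr (Inl 0)"
    then have "chain TQ (Inr 0) v (Inr 0)" using v by (simp add: tot_def example_defs)
    then obtain w where "v = map (Inr \<circ> Inr) w" by (rule chain_tot_InrE)
    then have "Inr (Inl 0) # map (Inr \<circ> Inr) (q_word (f # v)) = f # v" using q by simp
    then show ?case using peq.rfl[OF Cons.prems] by metis
  next
    assume x: "f = Inl 0"
    then have v0: "chain TQ (Inl 0) v (Inr 0)" using v by (simp add: tot_def example_defs)
    let ?w = "map (Inr \<circ> Inr) (q_word v) :: (nat + nat + nat) list"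
    have IH: "peq TQ (Inl 0) v (Inr (Inl 0) # ?w)" by (rule Cons.IH[OF v0])
    then have "chain TQ (Inl 0) (Inr (Inl 0) # ?w) (Inr 0)"
      using peq_imp_chains[OF IH] wf_catpres_tot[OF wf_Q0] v0 chain_target_unique by metis
    then have w: "chain TQ (Inr 0) ?w (Inr 0)" by (simp add: tot_def example_defs)
    have a: "peq TQ (Inl 0) (f # v) (Inl 0 # Inr (Inl 0) # ?w)"
      using peq.pre[OF IH, of "Inl 0"] x by (simp add: tot_def example_defs)
    have b: "peq TQ (Inl 0) ([Inl 0, Inr (Inl 0)] @ ?w) ([Inr (Inl 0), Inr (Inr 0)] @ ?w)"
      by (rule peq_append_right[OF peq.ax _ w]) (simp_all add: tot_def example_defs)
    have "map (Inr \<circ> Inr) (q_word (f # v)) = Inr (Inr 0) # ?w" using x by simp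
    then show ?case using peq.trans[OF a b[unfolded append_Cons append_Nil]] by metis
  qed
qed simp

text \<open>The relation \<open>q.e\<^sub>1 = q.e\<^sub>1.e\<^sub>1\<close> propagates behind arbitrarily many \<open>e\<^sub>0\<close>'s, since
  \<open>q.e\<^sub>0\<^sup>m = x\<^sup>m.q\<close>.\<close>
lemma q_zeros_e1_idem:
  "peq TQ (Inl 0) (Inr (Inl 0) # map (Inr \<circ> Inr) (replicate m 0 @ [1]))
                  (Inr (Inl 0) # map (Inr \<circ> Inr) (replicate m 0 @ [1, 1]))"
proof -
  let ?x = "map Inl (replicate m 0) :: (nat + nat + nat) list"
  let ?u = "?x @ [Inr (Inl 0), Inr (Inr 1)]" and ?v = "?x @ [Inr (Inl 0), Inr (Inr 1), Inr (Inr 1)]"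
  have x: "chain TQ (Inl 0) ?x (Inl 0)"
    by (rule chain_tot_Inl) (induction m, simp_all add: example_defs)
  have "peq TQ (Inl 0) ?u ?v"
    by (rule peq_append_left[OF peq.ax x]) (simp add: tot_def example_defs)
  moreover have "chain TQ (Inl 0) ?u (Inr 0)" "chain TQ (Inl 0) ?v (Inr 0)"
    using x by (simp_all add: chain_append tot_def example_defs)
  ultimately have "peq TQ (Inl 0) (Inr (Inl 0) # map (Inr \<circ> Inr) (q_word ?u))
                                (Inr (Inl 0) # map (Inr \<circ> Inr) (q_word ?v))"
    using q_normal_form by (meson peq.sym peq.trans)
  then show ?thesis by (simp del: map_replicate)
qed

lemma ract_e1_idem:
  assumes "(d, X, Y) \<in> comp_triples C0 P0 D0 Q0 E0 0 0" "comp_word (d, X, Y) = replicate n 0"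
  shows "ract D0 Q0 E0 d Y [1] = ract D0 Q0 E0 d Y [1, 1]"
proof -
  obtain u where u: "chain TP (Inl 0) u (Inr d)" "X = cls TP (Inl 0) u"
    using assms(1) by (auto simp: comp_triples_def elim: pelts_clsE)
  obtain v where v: "chain TQ (Inl d) v (Inr 0)" "Y = cls TQ (Inl d) v"
    using assms(1) by (auto simp: comp_triples_def elim: pelts_clsE)
  have d: "d = 0" using chain_sort[OF v(1)] sorts_TQ by auto
  define m where "m = n - length (p_word u)"
  have "p_word u @ nf (q_word v) = replicate n 0"
    using comp_word_cls[OF u(1) v(1)] u(2) v(2) assms(2) by simp
  then have "nf (q_word v) = replicate m 0"
    unfolding m_def by (metis append_eq_conv_conj drop_replicate)
  then have "q_word v = replicate m 0" by (rule nf_eq_replicate_zero)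
  then have q: "peq TQ (Inl 0) v (Inr (Inl 0) # map (Inr \<circ> Inr) (replicate m 0))"
    using q_normal_form[of v] v(1) d by metis
  have v0: "chain TQ (Inl 0) v (Inr 0)" using v(1) d by simp
  have e1: "chain E0 0 [1] 0" and e11: "chain E0 0 [1, 1] 0" by (simp_all add: E0_def)
  have p: "peq TQ (Inl 0) (v @ map (Inr \<circ> Inr) w)
                           (Inr (Inl 0) # map (Inr \<circ> Inr) (replicate m 0 @ w))"
    if "chain E0 0 w 0" for w
    using peq_append_right[OF q v0 chain_tot_Inr[OF that]] by simp
  have "peq TQ (Inl 0) (v @ map (Inr \<circ> Inr) [1]) (v @ map (Inr \<circ> Inr) [1, 1])"
    using peq.trans[OF peq.trans[OF p[OF e1] q_zeros_e1_idem] peq.sym[OF p[OF e11]]] .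
  then show ?thesis
    using ract_cls[OF v0 e1] ract_cls[OF v0 e11] cls_eqI v(2) d by metis
qed

lemma cact_e1_idem:
  assumes "Z \<in> comp_elts C0 P0 D0 Q0 E0 0 0" "class_word Z = replicate n 0"
  shows "cact C0 P0 D0 Q0 E0 0 0 [] Z [1] = cact C0 P0 D0 Q0 E0 0 0 [] Z [1, 1]"
proof -
  have "ract D0 Q0 E0 d Y [1] = ract D0 Q0 E0 d Y [1, 1]" if dXY: "(d, X, Y) \<in> Z" for d X Y
  proof (rule ract_e1_idem)
    show "(d, X, Y) \<in> comp_triples C0 P0 D0 Q0 E0 0 0"
      using comp_elts_subset[OF wf_D0 assms(1)] dXY by blast
    show "comp_word (d, X, Y) = replicate n 0"
      using class_word_eq[OF assms(1) dXY] assms(2) by simp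
  qed
  then show ?thesis unfolding cact_def
    by (intro Collect_cong bex_cong refl) (auto split: prod.splits)
qed

lemma exists_zeros_class: "\<exists>Z \<in> comp_elts C0 P0 D0 Q0 E0 0 0. class_word Z = replicate n 0"
proof -
  let ?t = "(0::nat, cls TP (Inl 0) [Inr (Inl 0)],
             cls TQ (Inl 0) (Inr (Inl 0) # map (Inr \<circ> Inr) (replicate n 0)))"
  let ?Z = "{y. comp_eq C0 P0 D0 Q0 E0 0 0 ?t y}"
  have p: "chain TP (Inl 0) [Inr (Inl 0)] (Inr 0)" by (simp add: tot_def example_defs)
  have q: "chain TQ (Inl 0) (Inr (Inl 0) # map (Inr \<circ> Inr) (replicate n 0)) (Inr 0)"
  proof -
    have "chain E0 0 (replicate n 0) 0" by (simp add: chain_E0_iff set_replicate_conv_if)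
    then show ?thesis
      using chain_tot_Inr[of E0 0 _ 0 D0 Q0] by (simp add: tot_def example_defs del: map_replicate)
  qed
  have t: "?t \<in> comp_triples C0 P0 D0 Q0 E0 0 0"
    using p q by (simp add: comp_triples_def cls_in_pelts D0_def)
  then have Z: "?Z \<in> comp_elts C0 P0 D0 Q0 E0 0 0"
    unfolding comp_elts_def
    by (rule quotientI[where r = "{(x, y). comp_eq C0 P0 D0 Q0 E0 0 0 x y}", simplified])
  have "class_word ?Z = comp_word ?t"
    using class_word_eq[OF Z] comp_eq.rfl[OF t] by simp
  also have "\<dots> = replicate n 0"
    using comp_word_cls[OF p q] by (simp add: nf_zeros set_replicate_conv_if del: map_replicate)
  finally show ?thesis using Z by blast
qed

section \<open>No finite presentation of the composite\<close>

text \<open>The part of an isomorphism \<open>[[R]] \<cong> [[P]] \<odot> [[Q]]\<close> used below: its component at the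
  only pair of sorts, natural with respect to the right action.\<close>
locale presents_composite =
  fixes R :: "(nat, nat, nat, nat, nat) upres"
    and \<phi> :: "(nat + nat + nat) list set
             \<Rightarrow> (nat \<times> (nat + nat + nat) list set \<times> (nat + nat + nat) list set) set"
  assumes wf_R: "wf_upres C0 R E0"
    and bij: "bij_betw \<phi> (pelts C0 R E0 0 0) (comp_elts C0 P0 D0 Q0 E0 0 0)"
    and natural: "chain E0 0 h 0 \<Longrightarrow> X \<in> pelts C0 R E0 0 0 \<Longrightarrow>
      \<phi> (ract C0 R E0 0 (lact C0 R E0 0 [] X) h) = cact C0 P0 D0 Q0 E0 0 0 [] (\<phi> X) h"
begin

abbreviation "TR \<equiv> tot C0 R E0"

lemma \<phi>_cls_append:
  assumes "chain TR (Inl 0) l (Inr 0)" "chain E0 0 w 0"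
  shows "\<phi> (cls TR (Inl 0) (l @ map (Inr \<circ> Inr) w))
           = cact C0 P0 D0 Q0 E0 0 0 [] (\<phi> (cls TR (Inl 0) l)) w"
  using natural[OF assms(2) cls_in_pelts[OF assms(1)]] lact_Nil_cls[OF assms(1)] ract_cls[OF assms]
  by simp

definition gen_word :: "nat \<Rightarrow> nat list" where
  "gen_word r = class_word (\<phi> (cls TR (Inl 0) [Inr (Inl r)]))"

lemma class_word_\<phi>:
  assumes "chain TR (Inl 0) l (Inr 0)"
  shows "class_word (\<phi> (cls TR (Inl 0) l)) = nf (r_word gen_word l)"
proof -
  obtain r w where l: "l = Inr (Inl r) # map (Inr \<circ> Inr) w" and r: "r \<in> pfuns R" "psrc R r = 0"
    and w: "chain E0 (ptgt R r) w 0"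
    using chain_tot_cross_funs_empty[OF _ assms] by (auto simp: C0_def)
  have "ptgt R r = 0" using wf_R r(1) by (simp add: wf_upres_def E0_def)
  then have r0: "chain TR (Inl 0) [Inr (Inl r)] (Inr 0)" and w0: "chain E0 0 w 0"
    using r w by (simp_all add: tot_def example_defs)
  have Zr: "\<phi> (cls TR (Inl 0) [Inr (Inl r)]) \<in> comp_elts C0 P0 D0 Q0 E0 0 0"
    using bij_betwE[OF bij] cls_in_pelts[OF r0] by blast
  have Z: "\<phi> (cls TR (Inl 0) l)
           = cact C0 P0 D0 Q0 E0 0 0 [] (\<phi> (cls TR (Inl 0) [Inr (Inl r)])) w"
    using \<phi>_cls_append[OF r0 w0] l by simp
  have ZC: "\<phi> (cls TR (Inl 0) l) \<in> comp_elts C0 P0 D0 Q0 E0 0 0"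
    using bij_betwE[OF bij] cls_in_pelts[OF assms] by blast
  then obtain z where "z \<in> \<phi> (cls TR (Inl 0) l)" using comp_elts_nonempty[OF ZC] by blast
  then show ?thesis
    using class_word_eq[OF ZC] comp_word_cact[OF Zr w0] Z l by (simp add: gen_word_def)
qed

lemma eqns_bounded_equiv:
  assumes "\<And>s u v. (s, u, v) \<in> peqns R \<Longrightarrow>
    length (r_word gen_word u) + length (r_word gen_word v) < n"
  shows "\<forall>(s, u, v) \<in> peqns R. bounded_equiv n (r_word gen_word u) (r_word gen_word v)"
proof (intro ballI, clarify)
  fix s u v assume eq: "(s, u, v) \<in> peqns R"
  obtain c d where s: "s = Inl c" and u: "chain TR s u (Inr d)" and v: "chain TR s v (Inr d)"
    using wf_R eq unfolding wf_upres_def by blast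
  have "c = 0" "d = 0"
    using chain_sort[OF u] chain_target_sort[OF wf_catpres_tot[OF wf_R] u] s
    by (auto simp: tot_def example_defs)
  then have "peq TR (Inl 0) u v" by (intro peq.ax) (use eq s in \<open>simp add: tot_def\<close>)
  then have "cls TR (Inl 0) u = cls TR (Inl 0) v" by (rule cls_eqI)
  then have "nf (r_word gen_word u) = nf (r_word gen_word v)"
    using class_word_\<phi> u v s \<open>c = 0\<close> \<open>d = 0\<close> by metis
  moreover have "\<not> zero_prefix n (r_word gen_word u)" "\<not> zero_prefix n (r_word gen_word v)"
    using assms[OF eq] zero_prefix_length by fastforce+
  ultimately show "bounded_equiv n (r_word gen_word u) (r_word gen_word v)"
    by (simp add: bounded_equiv_def)
qed

lemma infinite_peqns: "infinite (peqns R)"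
proof
  assume fin: "finite (peqns R)"
  define n where
    "n = Suc (Max ((\<lambda>(s, u, v). length (r_word gen_word u) + length (r_word gen_word v)) ` peqns R))"
  have "length (r_word gen_word u) + length (r_word gen_word v) < n" if "(s, u, v) \<in> peqns R"
    for s u v
  proof -
    have "length (r_word gen_word u) + length (r_word gen_word v)
      \<le> Max ((\<lambda>(s, u, v). length (r_word gen_word u) + length (r_word gen_word v)) ` peqns R)"
      using fin that by (intro Max_ge) force+
    then show ?thesis unfolding n_def by simp
  qed
  then have eqns: "\<forall>(s, u, v) \<in> peqns R. bounded_equiv n (r_word gen_word u) (r_word gen_word v)"
    by (rule eqns_bounded_equiv)
  obtain Z where Z: "Z \<in> comp_elts C0 P0 D0 Q0 E0 0 0" "class_word Z = replicate n 0"
    using exists_zeros_class by blast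
  then obtain X where X: "X \<in> pelts C0 R E0 0 0" "Z = \<phi> X"
    using bij unfolding bij_betw_def by blast
  obtain l where l: "chain TR (Inl 0) l (Inr 0)" "\<phi> (cls TR (Inl 0) l) = Z"
    using X by (auto elim: pelts_clsE)
  then have "r_word gen_word l = replicate n 0"
    using class_word_\<phi> Z(2) nf_eq_replicate_zero by metis
  define l1 where "l1 = l @ map (Inr \<circ> Inr) [1]"
  define l2 where "l2 = l @ map (Inr \<circ> Inr) [1, 1]"
  have e1: "chain E0 0 [1] 0" and e11: "chain E0 0 [1, 1] 0" by (simp_all add: E0_def)
  have l1: "chain TR (Inl 0) l1 (Inr 0)" and l2: "chain TR (Inl 0) l2 (Inr 0)"
    unfolding l1_def l2_def using l(1) chain_tot_Inr[OF e1] chain_tot_Inr[OF e11]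
    by (auto simp: chain_append)
  have "\<phi> (cls TR (Inl 0) l1) = \<phi> (cls TR (Inl 0) l2)"
    using \<phi>_cls_append[OF l(1) e1] \<phi>_cls_append[OF l(1) e11] cact_e1_idem[OF Z] l(2)
    unfolding l1_def l2_def by simp
  then have "cls TR (Inl 0) l1 = cls TR (Inl 0) l2"
    using bij_betw_imp_inj_on[OF bij] cls_in_pelts[OF l1] cls_in_pelts[OF l2]
    by (auto dest: inj_onD)
  then have "l2 \<in> cls TR (Inl 0) l1" using self_in_cls[OF l2] by simp
  then have "peq TR (Inl 0) l1 l2" by (simp add: cls_def)
  then have "bounded_equiv n (r_word gen_word l1) (r_word gen_word l2)"
    by (rule peq_R_word[OF wf_R eqns])
  then show False
    using \<open>r_word gen_word l = replicate n 0\<close>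
    by (simp add: l1_def l2_def bounded_equiv_def zero_prefix_def)
qed

end

lemma iso_to_comp_presents_composite:
  fixes R :: "(nat, nat, nat, nat, nat) upres"
  assumes "wf_upres C0 R E0" "iso_to_comp C0 R E0 P0 D0 Q0"
  shows "\<exists>\<phi>. presents_composite R \<phi>"
proof -
  obtain \<Phi> where bij: "\<forall>c\<in>sorts C0. \<forall>e\<in>sorts E0.
      bij_betw (\<Phi> c e) (pelts C0 R E0 c e) (comp_elts C0 P0 D0 Q0 E0 c e)"
    and nat: "\<forall>c c' e e' f h X. chain C0 c' f c \<longrightarrow> chain E0 e h e' \<longrightarrow> X \<in> pelts C0 R E0 c e \<longrightarrow>
      \<Phi> c' e' (ract C0 R E0 c' (lact C0 R E0 c' f X) h) = cact C0 P0 D0 Q0 E0 c' e' f (\<Phi> c e X) h"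
    using assms(2) unfolding iso_to_comp_def by blast
  have "chain C0 0 [] 0" by (simp add: C0_def)
  then have "presents_composite R (\<Phi> 0 0)"
    using assms(1) bij nat by unfold_locales (auto simp: C0_def E0_def)
  then show ?thesis by blast
qed

theorem mainTheorem17:
  shows "\<exists>(C :: (nat, nat) catpres) (D :: (nat, nat) catpres) (E :: (nat, nat) catpres)
            (P :: (nat, nat, nat, nat, nat) upres) (Q :: (nat, nat, nat, nat, nat) upres).
           wf_upres C P D \<and> finite_upres C P D \<and> nongenerative C P D \<and>
           wf_upres D Q E \<and> finite_upres D Q E \<and> nongenerative D Q E \<and>
           \<not> (\<exists>R :: (nat, nat, nat, nat, nat) upres.
                 wf_upres C R E \<and> finite_upres C R E \<and> iso_to_comp C R E P D Q)"
proof -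
  have "\<not> (wf_upres C0 R E0 \<and> finite_upres C0 R E0 \<and> iso_to_comp C0 R E0 P0 D0 Q0)"
    for R :: "(nat, nat, nat, nat, nat) upres"
  proof
    assume R: "wf_upres C0 R E0 \<and> finite_upres C0 R E0 \<and> iso_to_comp C0 R E0 P0 D0 Q0"
    then obtain \<phi> where "presents_composite R \<phi>" using iso_to_comp_presents_composite by blast
    then have "infinite (peqns R)" by (rule presents_composite.infinite_peqns)
    with R show False by (simp add: finite_upres_def)
  qed
  then show ?thesis
    using wf_P0 finite_P0 nongenerative_P0 wf_Q0 finite_Q0 nongenerative_Q0 by blast
qed

end
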